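(* Let $\kappa$ and $\lambda$ be positive integers, $p$ a prime number, $x \in \mathbb{Z}_p$ a $p$-adic integer that is algebraic over $\mathbb{Q}$, and $(x_n)_{n\ge1}$ a nondecreasing sequence of positive integers such that $x_n \equiv x \pmod{p^n}$ in $\mathbb{Z}_p$ for every $n$. If $(x_n)$ is not eventually constant, then $x_n \ge \lambda n + \kappa$ for every sufficiently large $n$. *)

theory Defs
  imports "HOL-Computational_Algebra.Polynomial" "HOL-Number_Theory.Cong"
begin

text \<open>The p-adic integers Z_p, realised as the inverse limit of Z/p^n Z:
  a p-adic integer is the compatible sequence of its canonical residues
  a n in {0..<p^n}, with a (n+1) reduced mod p^n equal to a n.\<close>
definition padic_int :: "int \<Rightarrow> (nat \<Rightarrow> int) set" where
  "padic_int p = {a. \<forall>n. 0 \<le> a n \<and> a n < p ^ n \<and> a (Suc n) mod p ^ n = a n}"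

definition padic_cong :: "int \<Rightarrow> nat \<Rightarrow> int \<Rightarrow> (nat \<Rightarrow> int) \<Rightarrow> bool" where
  "padic_cong p n m a \<longleftrightarrow> [m = a n] (mod p ^ n)"

text \<open>A p-adic integer is algebraic over Q iff it is a root of a nonzero
  polynomial with rational (equivalently, after clearing denominators, integer)
  coefficients; P(a) = 0 in Z_p means P(a) = 0 mod p^n for all n.\<close>
definition padic_algebraic :: "int \<Rightarrow> (nat \<Rightarrow> int) \<Rightarrow> bool" where
  "padic_algebraic p a \<longleftrightarrow>
     (\<exists>P :: int poly. P \<noteq> 0 \<and> (\<forall>n. [poly P (a n) = 0] (mod p ^ n)))"

end

theory Submission
  imports Defs "HOL-Real_Asymp.Real_Asymp"
begin

text \<open>Let P be a nonzero integer polynomial with P(x) = 0 in Z_p. Then p^n divides P(x_n).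
  An integer nondecreasing sequence that is not eventually constant tends to infinity, so
  x_n is eventually not one of the finitely many roots of P, and hence
  p^n \<le> |P(x_n)|. If x_n < \<lambda>n + \<kappa>, the right-hand side is polynomially bounded in n,
  which is impossible for large n against the exponential lower bound.\<close>

lemma cong_poly:
  fixes P :: "int poly"
  assumes "[a = b] (mod m)"
  shows "[poly P a = poly P b] (mod m)"
  by (induction P) (simp_all add: assms cong_add cong_mult)

lemma abs_poly_le_sum_abs_coeff:
  fixes P :: "'a::linordered_idom poly"
  assumes "1 \<le> y" and "y \<le> b"
  shows "\<bar>poly P y\<bar> \<le> (\<Sum>i\<le>degree P. \<bar>coeff P i\<bar>) * b ^ degree P"
proof -
  have "\<bar>poly P y\<bar> = \<bar>\<Sum>i\<le>degree P. coeff P i * y ^ i\<bar>"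
    by (simp add: poly_altdef)
  also have "\<dots> \<le> (\<Sum>i\<le>degree P. \<bar>coeff P i * y ^ i\<bar>)"
    by (rule sum_abs)
  also have "\<dots> = (\<Sum>i\<le>degree P. \<bar>coeff P i\<bar> * y ^ i)"
    using assms by (simp add: abs_mult power_abs)
  also have "\<dots> \<le> (\<Sum>i\<le>degree P. \<bar>coeff P i\<bar> * b ^ degree P)"
  proof (rule sum_mono)
    fix i assume "i \<in> {..degree P}"
    then have "y ^ i \<le> b ^ degree P"
      using assms by (meson atMost_iff order_trans power_increasing power_mono zero_le_one)
    then show "\<bar>coeff P i\<bar> * y ^ i \<le> \<bar>coeff P i\<bar> * b ^ degree P"
      by (simp add: mult_left_mono)
  qed
  finally show ?thesis
    by (simp add: sum_distrib_right)
qed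

lemma filterlim_at_top_if_nondecreasing_not_eventually_const:
  fixes X :: "nat \<Rightarrow> int"
  assumes step: "\<forall>n\<ge>m. X n \<le> X (Suc n)"
    and nonconst: "\<not> (\<exists>N. \<forall>n\<ge>N. X n = X N)"
  shows "filterlim X at_top sequentially"
  unfolding filterlim_at_top
proof
  fix B
  have mono: "X k \<le> X l" if "m \<le> k" "k \<le> l" for k l
    using that(2,1)
  proof (induction l rule: dec_induct)
    case (step l)
    then show ?case using assms(1) by (meson le_trans order_trans)
  qed simp
  show "eventually (\<lambda>n. B \<le> X n) sequentially"
  proof (rule ccontr)
    assume not_ev: "\<not> eventually (\<lambda>n. B \<le> X n) sequentially"
    have bounded: "X n < B" if "n \<ge> m" for n
      using not_ev mono that unfolding eventually_sequentially by (meson not_le order_trans)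
    let ?S = "X ` {m..}"
    have fin: "finite ?S"
      by (rule finite_subset[of _ "{X m..B}"]) (auto intro: mono less_imp_le[OF bounded])
    obtain N where N: "N \<ge> m" "X N = Max ?S"
      using Max_in[OF fin] by fastforce
    have "X n = X N" if "n \<ge> N" for n
      using mono[of N n] Max_ge[OF fin, of "X n"] N that by auto
    with nonconst show False by blast
  qed
qed

lemma eventually_poly_nonzero_at_top:
  fixes P :: "'a::linordered_idom poly"
  assumes "P \<noteq> 0" and "filterlim f at_top F"
  shows "eventually (\<lambda>n. poly P (f n) \<noteq> 0) F"
proof -
  define B where "B = Max (insert 0 {y. poly P y = 0})"
  have "\<forall>y\<in>{y. poly P y = 0}. y \<le> B"
    unfolding B_def using poly_roots_finite[OF assms(1)] by simp
  moreover have "eventually (\<lambda>n. B + 1 \<le> f n) F"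
    using assms(2) filterlim_at_top by blast
  ultimately show ?thesis
    by (rule_tac eventually_mono) force+
qed

lemma eventually_poly_growth_less_exp:
  fixes C lam kappa :: int
  assumes "lam > 0" and "kappa > 0"
  shows "eventually (\<lambda>n. C * (lam * int n + kappa) ^ d < 2 ^ n) sequentially"
proof (cases "C > 0")
  case True
  have "eventually (\<lambda>n. real_of_int C * (real_of_int lam * real n + real_of_int kappa) powr real d
      < 2 powr real n) sequentially"
    using assms True by real_asymp
  then show ?thesis
  proof (rule eventually_mono)
    fix n
    have "real_of_int lam * real n + real_of_int kappa > 0"
      using assms by (simp add: add_nonneg_pos)
    moreover assume "real_of_int C * (real_of_int lam * real n + real_of_int kappa) powr real d
      < 2 powr real n"
    ultimately have "real_of_int (C * (lam * int n + kappa) ^ d) < real_of_int (2 ^ n)"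
      by (simp add: powr_realpow)
    then show "C * (lam * int n + kappa) ^ d < 2 ^ n"
      by linarith
  qed
next
  case False
  have "C * (lam * int n + kappa) ^ d \<le> 0" for n
    using False assms by (intro mult_nonpos_nonneg) auto
  then show ?thesis
    by (intro always_eventually) (smt (verit) zero_less_power)
qed

theorem lemma4p6:
  fixes kappa lam p :: int and x :: "nat \<Rightarrow> int" and X :: "nat \<Rightarrow> int"
  assumes "kappa > 0" and "lam > 0"
    and "prime p"
    and "x \<in> padic_int p"
    and "padic_algebraic p x"
    and "\<forall>n\<ge>1. X n > 0"
    and "\<forall>n\<ge>1. X n \<le> X (Suc n)"
    and "\<forall>n\<ge>1. padic_cong p n (X n) x"
    and "\<not> (\<exists>N. \<forall>n\<ge>N. X n = X N)"
  shows "\<exists>N. \<forall>n\<ge>N. X n \<ge> lam * int n + kappa"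
proof -
  obtain P :: "int poly" where "P \<noteq> 0" and root: "\<forall>n. [poly P (x n) = 0] (mod p ^ n)"
    using assms(5) unfolding padic_algebraic_def by blast
  define C where "C = (\<Sum>i\<le>degree P. \<bar>coeff P i\<bar>)"
  have dvd: "p ^ n dvd poly P (X n)" if "n \<ge> 1" for n
    using cong_trans[OF cong_poly root[rule_format]] assms(8) that
    by (simp add: padic_cong_def cong_0_iff)
  have "eventually (\<lambda>n. poly P (X n) \<noteq> 0) sequentially"
    using assms(7,9) \<open>P \<noteq> 0\<close>
    by (intro eventually_poly_nonzero_at_top filterlim_at_top_if_nondecreasing_not_eventually_const)
  moreover have "eventually (\<lambda>n. C * (lam * int n + kappa) ^ degree P < 2 ^ n) sequentially"
    by (rule eventually_poly_growth_less_exp[OF assms(2,1)])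
  ultimately have "eventually (\<lambda>n. X n \<ge> lam * int n + kappa) sequentially"
    using eventually_ge_at_top[of 1]
  proof eventually_elim
    case (elim n)
    show ?case
    proof (rule ccontr)
      assume "\<not> X n \<ge> lam * int n + kappa"
      then have "\<bar>poly P (X n)\<bar> \<le> C * (lam * int n + kappa) ^ degree P"
        unfolding C_def using assms(6) elim(3) by (intro abs_poly_le_sum_abs_coeff) auto
      moreover have "2 ^ n \<le> p ^ n"
        using prime_ge_2_int[OF assms(3)] by (simp add: power_mono)
      moreover have "\<bar>p ^ n\<bar> \<le> \<bar>poly P (X n)\<bar>"
        using dvd_imp_le_int[OF elim(1) dvd[OF elim(3)]] .
      ultimately show False using elim(2) by linarith
    qed
  qed
  then show ?thesis
    by (simp add: eventually_sequentially)
qed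

end
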